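(* Assume $d_{min}\ge d_{close}+d_{open}$ (i.e. $W\ge d_{open}$). Let $R$ be a regular run. If Dir is set to open at some moment $\alpha$, then Dir = open over the interval $(\alpha,\alpha+d_{open})$.
   Context: Setting (evolving algebra for the railroad crossing). States are structures over a vocabulary containing: a finite universe Tracks; the reals and ExtendedReals $=\mathbb{R}\cup\{\infty\}$ with standard $<$ and $+$ ($\infty$ largest); a nullary real-valued symbol $\mathrm{CT}$ (current time); positive real constants $d_{close},d_{open},d_{min},d_{max}$ with $d_{close}<d_{min}\le d_{max}$; a unary function TrackStatus from Tracks to $\{\text{empty},\text{coming},\text{incrossing}\}$; a unary function Deadline from Tracks to ExtendedReals; a nullary Dir with values in $\{\text{open},\text{close}\}$; a nullary GateStatus with values in $\{\text{opened},\text{closed}\}$. Put $W=d_{min}-d_{close}$ and $\Delta_{close}=d_{close}+(d_{max}-d_{min})=d_{max}-W$. For a track $x$, $s(x)$ is the condition [$\mathrm{TrackStatus}(x)=\text{empty}$ or $\mathrm{CT}+d_{open}<\mathrm{Deadline}(x)$], and SafeToOpen is $\forall x\in\mathrm{Tracks}\ s(x)$. The program has two modules (agents). Gate: simultaneously OpenGate "if Dir=open then GateStatus:=opened" and CloseGate "if Dir=close then GateStatus:=closed". Controller: simultaneously, for every track $x$, SetDeadline$(x)$ "if TrackStatus$(x)$=coming and Deadline$(x)=\infty$ then Deadline$(x):=\mathrm{CT}+W$", SignalClose$(x)$ "if $\mathrm{CT}=$Deadline$(x)$ then Dir:=close", ClearDeadline$(x)$ "if TrackStatus$(x)$=empty and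 Deadline$(x)<\infty$ then Deadline$(x):=\infty$", together with SignalOpen "if Dir=close and SafeToOpen then Dir:=open". Executing a module means computing all updates it generates in the current state and performing them simultaneously (nothing happens if the update set is inconsistent). A module is enabled at a state if its update set is consistent and contains an update that changes the state. TrackStatus is external (changed only by the environment); Deadline, Dir, GateStatus are internal (changed only by the modules); other symbols are static. Runs: for $t\mapsto R(t)$, $t\in[0,\infty)$, let $\rho(t)$ be the reduct of $R(t)$ without CT. $R$ is a pre-run if all $R(t)$ share a superuniverse, $\mathrm{CT}=t$ in $R(t)$, and for every $\tau>0$ there are $0=t_0<\dots<t_n=\tau$ with $\rho$ constant on each $(t_i,t_{i+1})$. For a term $e$ (free variables fixed), $e_t$ is its value in $R(t)$, $e_{t+}$ (resp. $e_{t-}$, $t>0$) its constant value on some $(t,t+\epsilon)$ (resp. $(t-\epsilon,t)$); likewise $\rho(t\pm)$. $e$ holds over an interval if it holds at each point; $e$ becomes (is set to) $a$ at $t$ if $e_{t-}\ne a=e_t$ or $e_t\neq a=e_{t+}$. A pre-run is a run if (i) whenever $\rho(t+)\neq\rho(t)$, $\rho(t+)$ is the CT-free reduct of the result of executing some modules at $R(t)$ (these agents fire at $t$), with external functions equal in $\rho(t)$ and $\rho(t+)$; (ii) whenever $t>0$ and $\rho(t)\ne\rho(t-)$, they differ only in external functions. An agent is immediate if it fires at every moment it is enabled; bounded if immediate or there is $b>0$ with no interval $(t,t+b)$ over which it is enabled but never fires. Initial states: TrackStatus$(x)$=empty and Deadline$(x)=\infty$ for every track $x$. A regular run is a run $R$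 with $R(0)$ initial such that: (Train Motion) for each track $x$ there is a finite or infinite sequence $0=t_0<t_1<t_2<\cdots$ (the significant moments of $x$) with TrackStatus$(x)$=empty over each $[t_{3i},t_{3i+1})$, =coming over each $[t_{3i+1},t_{3i+2})$ where $d_{min}\le t_{3i+2}-t_{3i+1}\le d_{max}$, =incrossing over each $[t_{3i+2},t_{3i+3})$, and, if the sequence is finite with last element $t_k$, then $3\mid k$ and TrackStatus$(x)$=empty over $[t_k,\infty)$; (Controller Timing) Controller is immediate; (Gate Timing) Gate is bounded, there is no interval $(t,t+d_{close})$ over which Dir=close and GateStatus=opened both hold, and no interval $(t,t+d_{open})$ over which Dir=open and GateStatus=closed both hold. *)

theory Defs
  imports Main "HOL.Real"
begin

datatype tstatus = Empty | Coming | Incrossing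
datatype dirv = DOpen | DClose
datatype gatev = Opened | Closed

datatype xreal = Fin real | PInf

fun xless :: "xreal \<Rightarrow> xreal \<Rightarrow> bool" where
  "xless (Fin a) (Fin b) = (a < b)"
| "xless (Fin a) PInf = True"
| "xless PInf _ = False"

text \<open>CT-free part of a state (the reduct rho(t)); CT is the time t itself.
  The finite universe Tracks is the finite type 't.\<close>
record 't rstate =
  TrackStatus :: "'t \<Rightarrow> tstatus"
  Deadline :: "'t \<Rightarrow> xreal"
  Dir :: dirv
  GateStatus :: gatev

datatype 't loc = LDeadline 't | LDir | LGate
datatype val = VDL xreal | VDir dirv | VGate gatev

type_synonym 't upd = "'t loc \<times> val"

fun val_at :: "'t loc \<Rightarrow> 't rstate \<Rightarrow> val" where
  "val_at (LDeadline x) s = VDL (Deadline s x)"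
| "val_at LDir s = VDir (Dir s)"
| "val_at LGate s = VGate (GateStatus s)"

fun getDL :: "val \<Rightarrow> xreal" where "getDL (VDL v) = v" | "getDL _ = PInf"
fun getDir :: "val \<Rightarrow> dirv" where "getDir (VDir v) = v" | "getDir _ = DOpen"
fun getGate :: "val \<Rightarrow> gatev" where "getGate (VGate v) = v" | "getGate _ = Opened"

definition consistent :: "'t upd set \<Rightarrow> bool" where
  "consistent U \<longleftrightarrow> (\<forall>l v v'. (l, v) \<in> U \<longrightarrow> (l, v') \<in> U \<longrightarrow> v = v')"

definition new_val :: "'t upd set \<Rightarrow> 't rstate \<Rightarrow> 't loc \<Rightarrow> val" where
  "new_val U s l = (if \<exists>v. (l, v) \<in> U then (THE v. (l, v) \<in> U) else val_at l s)"

definition apply_upds :: "'t upd set \<Rightarrow> 't rstate \<Rightarrow> 't rstate" where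
  "apply_upds U s = \<lparr> TrackStatus = TrackStatus s,
       Deadline = (\<lambda>x. getDL (new_val U s (LDeadline x))),
       Dir = getDir (new_val U s LDir),
       GateStatus = getGate (new_val U s LGate) \<rparr>"

definition fire_upds :: "'t upd set \<Rightarrow> 't rstate \<Rightarrow> 't rstate" where
  "fire_upds U s = (if consistent U then apply_upds U s else s)"

datatype agent = Gate | Controller

text \<open>Parameters: dc = d_close, dop = d_open, dmin = d_min (d_max is not used by the program).
  t is the current value of CT.\<close>

definition SafeToOpen :: "real \<Rightarrow> real \<Rightarrow> 't rstate \<Rightarrow> bool" where
  "SafeToOpen dop t s \<longleftrightarrow> (\<forall>x. TrackStatus s x = Empty \<or> xless (Fin (t + dop)) (Deadline s x))"

definition gate_upds :: "'t rstate \<Rightarrow> 't upd set" where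
  "gate_upds s =
     (if Dir s = DOpen then {(LGate, VGate Opened)} else {})
   \<union> (if Dir s = DClose then {(LGate, VGate Closed)} else {})"

definition controller_upds :: "real \<Rightarrow> real \<Rightarrow> real \<Rightarrow> real \<Rightarrow> 't rstate \<Rightarrow> 't upd set" where
  "controller_upds dc dop dmin t s =
     {(LDeadline x, VDL (Fin (t + (dmin - dc)))) | x.
         TrackStatus s x = Coming \<and> Deadline s x = PInf}
   \<union> {(LDir, VDir DClose) | x. Fin t = Deadline s x}
   \<union> {(LDeadline x, VDL PInf) | x. TrackStatus s x = Empty \<and> xless (Deadline s x) PInf}
   \<union> (if Dir s = DClose \<and> SafeToOpen dop t s then {(LDir, VDir DOpen)} else {})"

definition agent_upds :: "real \<Rightarrow> real \<Rightarrow> real \<Rightarrow> agent \<Rightarrow> real \<Rightarrow> 't rstate \<Rightarrow> 't upd set" where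
  "agent_upds dc dop dmin X t s =
     (case X of Gate \<Rightarrow> gate_upds s | Controller \<Rightarrow> controller_upds dc dop dmin t s)"

definition exec_agents :: "real \<Rightarrow> real \<Rightarrow> real \<Rightarrow> agent set \<Rightarrow> real \<Rightarrow> 't rstate \<Rightarrow> 't rstate" where
  "exec_agents dc dop dmin A t s = fire_upds (\<Union>X\<in>A. agent_upds dc dop dmin X t s) s"

definition enabled :: "real \<Rightarrow> real \<Rightarrow> real \<Rightarrow> agent \<Rightarrow> real \<Rightarrow> 't rstate \<Rightarrow> bool" where
  "enabled dc dop dmin X t s \<longleftrightarrow>
     consistent (agent_upds dc dop dmin X t s) \<and>
     (\<exists>(l, v) \<in> agent_upds dc dop dmin X t s. val_at l s \<noteq> v)"

text \<open>A run is given by rho :: real => 't rstate (only t >= 0 matters); R(t) is rho(t)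
  together with CT = t.\<close>

definition pre_run :: "(real \<Rightarrow> 't rstate) \<Rightarrow> bool" where
  "pre_run \<rho> \<longleftrightarrow> (\<forall>\<tau>>0. \<exists>(n::nat) (ts::nat \<Rightarrow> real).
      ts 0 = 0 \<and> ts n = \<tau> \<and> (\<forall>i<n. ts i < ts (Suc i)) \<and>
      (\<forall>i<n. \<forall>u\<in>{ts i<..<ts (Suc i)}. \<forall>v\<in>{ts i<..<ts (Suc i)}. \<rho> u = \<rho> v))"

definition right_val :: "(real \<Rightarrow> 'a) \<Rightarrow> real \<Rightarrow> 'a" where
  "right_val f t = (THE a. \<exists>\<epsilon>>0. \<forall>u\<in>{t<..<t+\<epsilon>}. f u = a)"

definition left_val :: "(real \<Rightarrow> 'a) \<Rightarrow> real \<Rightarrow> 'a" where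
  "left_val f t = (THE a. \<exists>\<epsilon>>0. \<forall>u\<in>{t-\<epsilon><..<t}. f u = a)"

definition fires :: "real \<Rightarrow> real \<Rightarrow> real \<Rightarrow> (real \<Rightarrow> 't rstate) \<Rightarrow> agent \<Rightarrow> real \<Rightarrow> bool" where
  "fires dc dop dmin \<rho> X t \<longleftrightarrow> right_val \<rho> t \<noteq> \<rho> t \<and>
     (\<exists>A. X \<in> A \<and> right_val \<rho> t = exec_agents dc dop dmin A t (\<rho> t))"

definition is_run :: "real \<Rightarrow> real \<Rightarrow> real \<Rightarrow> (real \<Rightarrow> 't rstate) \<Rightarrow> bool" where
  "is_run dc dop dmin \<rho> \<longleftrightarrow> pre_run \<rho> \<and>
     (\<forall>t\<ge>0. right_val \<rho> t \<noteq> \<rho> t \<longrightarrow>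
        (\<exists>A. right_val \<rho> t = exec_agents dc dop dmin A t (\<rho> t)) \<and>
        TrackStatus (right_val \<rho> t) = TrackStatus (\<rho> t)) \<and>
     (\<forall>t>0. \<rho> t \<noteq> left_val \<rho> t \<longrightarrow>
        Deadline (\<rho> t) = Deadline (left_val \<rho> t) \<and>
        Dir (\<rho> t) = Dir (left_val \<rho> t) \<and>
        GateStatus (\<rho> t) = GateStatus (left_val \<rho> t))"

definition immediate :: "real \<Rightarrow> real \<Rightarrow> real \<Rightarrow> (real \<Rightarrow> 't rstate) \<Rightarrow> agent \<Rightarrow> bool" where
  "immediate dc dop dmin \<rho> X \<longleftrightarrow>
     (\<forall>t\<ge>0. enabled dc dop dmin X t (\<rho> t) \<longrightarrow> fires dc dop dmin \<rho> X t)"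

definition bounded_agent :: "real \<Rightarrow> real \<Rightarrow> real \<Rightarrow> (real \<Rightarrow> 't rstate) \<Rightarrow> agent \<Rightarrow> bool" where
  "bounded_agent dc dop dmin \<rho> X \<longleftrightarrow> immediate dc dop dmin \<rho> X \<or>
     (\<exists>b>0. \<not> (\<exists>t\<ge>0. (\<forall>u\<in>{t<..<t+b}. enabled dc dop dmin X u (\<rho> u)) \<and>
                       (\<forall>u\<in>{t<..<t+b}. \<not> fires dc dop dmin \<rho> X u)))"

definition initial_state :: "'t rstate \<Rightarrow> bool" where
  "initial_state s \<longleftrightarrow> (\<forall>x. TrackStatus s x = Empty \<and> Deadline s x = PInf)"

text \<open>The three phases of the i-th passage of a train on track x.\<close>
definition phase_ok :: "real \<Rightarrow> real \<Rightarrow> (real \<Rightarrow> 't rstate) \<Rightarrow> 't \<Rightarrow> (nat \<Rightarrow> real) \<Rightarrow> nat \<Rightarrow> bool" where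
  "phase_ok dmin dmax \<rho> x s i \<longleftrightarrow>
     (\<forall>u\<in>{s (3*i)..<s (3*i+1)}. TrackStatus (\<rho> u) x = Empty) \<and>
     (\<forall>u\<in>{s (3*i+1)..<s (3*i+2)}. TrackStatus (\<rho> u) x = Coming) \<and>
     dmin \<le> s (3*i+2) - s (3*i+1) \<and> s (3*i+2) - s (3*i+1) \<le> dmax \<and>
     (\<forall>u\<in>{s (3*i+2)..<s (3*i+3)}. TrackStatus (\<rho> u) x = Incrossing)"

definition train_motion :: "real \<Rightarrow> real \<Rightarrow> (real \<Rightarrow> 't rstate) \<Rightarrow> 't \<Rightarrow> bool" where
  "train_motion dmin dmax \<rho> x \<longleftrightarrow> (\<exists>s::nat \<Rightarrow> real. s 0 = 0 \<and>
     ((\<exists>k. 3 dvd k \<and> (\<forall>i<k. s i < s (Suc i)) \<and>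
           (\<forall>i. 3*i+3 \<le> k \<longrightarrow> phase_ok dmin dmax \<rho> x s i) \<and>
           (\<forall>u\<ge>s k. TrackStatus (\<rho> u) x = Empty))
      \<or> ((\<forall>i. s i < s (Suc i)) \<and> (\<forall>i. phase_ok dmin dmax \<rho> x s i))))"

definition regular_run :: "real \<Rightarrow> real \<Rightarrow> real \<Rightarrow> real \<Rightarrow> (real \<Rightarrow> 't rstate) \<Rightarrow> bool" where
  "regular_run dc dop dmin dmax \<rho> \<longleftrightarrow>
     is_run dc dop dmin \<rho> \<and> initial_state (\<rho> 0) \<and>
     (\<forall>x. train_motion dmin dmax \<rho> x) \<and>
     immediate dc dop dmin \<rho> Controller \<and>
     bounded_agent dc dop dmin \<rho> Gate \<and>
     \<not> (\<exists>t\<ge>0. \<forall>u\<in>{t<..<t+dc}. Dir (\<rho> u) = DClose \<and> GateStatus (\<rho> u) = Opened) \<and>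
     \<not> (\<exists>t\<ge>0. \<forall>u\<in>{t<..<t+dop}. Dir (\<rho> u) = DOpen \<and> GateStatus (\<rho> u) = Closed)"

text \<open>Term e (here a function of the CT-free state) becomes / is set to a at t.\<close>
definition set_to_at :: "(real \<Rightarrow> 't rstate) \<Rightarrow> ('t rstate \<Rightarrow> 'b) \<Rightarrow> 'b \<Rightarrow> real \<Rightarrow> bool" where
  "set_to_at \<rho> e a t \<longleftrightarrow>
     (t > 0 \<and> e (left_val \<rho> t) \<noteq> a \<and> e (\<rho> t) = a) \<or>
     (e (\<rho> t) \<noteq> a \<and> e (right_val \<rho> t) = a)"

end

theory Submission
  imports Defs Complex_Main
begin

(* When Dir is set to open at alpha, SignalOpen fires, so SafeToOpen held: each track was empty
   (its deadline is then cleared or already infinite) or had its deadline beyond alpha + d_open, and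
   deadlines set at alpha itself lie at alpha + W >= alpha + d_open.  So just after alpha, Dir is open
   and no deadline lies before alpha + d_open.  No discrete step before alpha + d_open breaks this:
   SignalClose needs CT to equal a deadline, and a deadline set at CT > alpha lies at CT + W.  As a run
   is piecewise constant, an induction along real time carries the invariant over
   (alpha, alpha + d_open). *)

lemma eventually_at_right_real_iff:
  fixes t :: real
  shows "(\<forall>\<^sub>F u in at_right t. P u) \<longleftrightarrow> (\<exists>\<epsilon>>0. \<forall>u\<in>{t<..<t+\<epsilon>}. P u)"
proof
  assume "\<forall>\<^sub>F u in at_right t. P u"
  then obtain b where "t < b" "\<forall>u>t. u < b \<longrightarrow> P u" by (auto simp: eventually_at_right_field)
  then show "\<exists>\<epsilon>>0. \<forall>u\<in>{t<..<t+\<epsilon>}. P u" by (intro exI[of _ "b - t"]) auto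
next
  assume "\<exists>\<epsilon>>0. \<forall>u\<in>{t<..<t+\<epsilon>}. P u"
  then obtain \<epsilon> where "\<epsilon> > 0" "\<forall>u\<in>{t<..<t+\<epsilon>}. P u" by blast
  then show "\<forall>\<^sub>F u in at_right t. P u"
    unfolding eventually_at_right_field by (intro exI[of _ "t + \<epsilon>"]) auto
qed

lemma eventually_at_left_real_iff:
  fixes t :: real
  shows "(\<forall>\<^sub>F u in at_left t. P u) \<longleftrightarrow> (\<exists>\<epsilon>>0. \<forall>u\<in>{t-\<epsilon><..<t}. P u)"
proof
  assume "\<forall>\<^sub>F u in at_left t. P u"
  then obtain b where "b < t" "\<forall>u>b. u < t \<longrightarrow> P u" by (auto simp: eventually_at_left_field)
  then show "\<exists>\<epsilon>>0. \<forall>u\<in>{t-\<epsilon><..<t}. P u" by (intro exI[of _ "t - b"]) auto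
next
  assume "\<exists>\<epsilon>>0. \<forall>u\<in>{t-\<epsilon><..<t}. P u"
  then obtain \<epsilon> where "\<epsilon> > 0" "\<forall>u\<in>{t-\<epsilon><..<t}. P u" by blast
  then show "\<forall>\<^sub>F u in at_left t. P u"
    unfolding eventually_at_left_field by (intro exI[of _ "t - \<epsilon>"]) auto
qed

lemma right_val_eqI:
  fixes t :: real
  assumes "\<forall>\<^sub>F u in at_right t. f u = c"
  shows "right_val f t = c"
  unfolding right_val_def eventually_at_right_real_iff[symmetric]
proof (rule the_equality)
  fix a assume "\<forall>\<^sub>F u in at_right t. f u = a"
  with assms have "\<forall>\<^sub>F u in at_right t. a = c" by eventually_elim simp
  then show "a = c" by (simp add: eventually_const trivial_limit_at_right_real)
qed (rule assms)

lemma left_val_eqI: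
  fixes t :: real
  assumes "\<forall>\<^sub>F u in at_left t. f u = c"
  shows "left_val f t = c"
  unfolding left_val_def eventually_at_left_real_iff[symmetric]
proof (rule the_equality)
  fix a assume "\<forall>\<^sub>F u in at_left t. f u = a"
  with assms have "\<forall>\<^sub>F u in at_left t. a = c" by eventually_elim simp
  then show "a = c" by (simp add: eventually_const trivial_limit_at_left_real)
qed (rule assms)

lemma strict_partition_segment:
  fixes ts :: "nat \<Rightarrow> real"
  assumes "\<forall>i<n. ts i < ts (Suc i)" "ts 0 \<le> t" "t < ts n"
  shows "\<exists>i<n. ts i \<le> t \<and> t < ts (Suc i)"
  using assms
proof (induction n)
  case (Suc n)
  show ?case
  proof (cases "t < ts n")
    case True
    with Suc show ?thesis by (metis less_Suc_eq)
  next
    case False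
    with Suc show ?thesis by (intro exI[of _ n]) auto
  qed
qed simp

lemma pre_run_eventually_right_val:
  assumes "pre_run \<rho>" "0 \<le> t"
  shows "\<forall>\<^sub>F u in at_right t. \<rho> u = right_val \<rho> t"
proof -
  obtain n ts where ts: "ts 0 = 0" "ts n = t + 1" "\<forall>i<n. ts i < ts (Suc i)"
    and const: "\<forall>i<n. \<forall>u\<in>{ts i<..<ts (Suc i)}. \<forall>v\<in>{ts i<..<ts (Suc i)}. \<rho> u = \<rho> v"
    using assms unfolding pre_run_def by (metis add_nonneg_pos zero_less_one)
  have "\<exists>i<n. ts i \<le> t \<and> t < ts (Suc i)"
    by (rule strict_partition_segment) (use ts assms(2) in simp_all)
  then obtain i where i: "i < n" "ts i \<le> t" "t < ts (Suc i)" by blast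
  define m where "m = (t + ts (Suc i)) / 2"
  have "\<forall>\<^sub>F u in at_right t. \<rho> u = \<rho> m"
    unfolding eventually_at_right_field
    using i const by (intro exI[of _ "ts (Suc i)"]) (auto simp: m_def)
  moreover from this have "right_val \<rho> t = \<rho> m" by (rule right_val_eqI)
  ultimately show ?thesis by simp
qed

lemma pre_run_eventually_left_val:
  assumes "pre_run \<rho>" "0 < t"
  shows "\<forall>\<^sub>F u in at_left t. \<rho> u = left_val \<rho> t"
proof -
  obtain n ts where ts: "ts 0 = 0" "ts n = t" "\<forall>i<n. ts i < ts (Suc i)"
    and const: "\<forall>i<n. \<forall>u\<in>{ts i<..<ts (Suc i)}. \<forall>v\<in>{ts i<..<ts (Suc i)}. \<rho> u = \<rho> v"
    using assms(1)[unfolded pre_run_def, rule_format, OF assms(2)] by blast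
  have "n \<noteq> 0" using ts(1,2) assms(2) by (metis less_irrefl)
  then obtain k where k: "n = Suc k" using not0_implies_Suc by blast
  have last: "ts k < t" using ts(2,3) k by auto
  have seg: "\<rho> u = \<rho> v" if "u \<in> {ts k<..<t}" "v \<in> {ts k<..<t}" for u v
    using const that k ts(2) by (metis lessI)
  define m where "m = (ts k + t) / 2"
  have "\<forall>\<^sub>F u in at_left t. \<rho> u = \<rho> m"
    unfolding eventually_at_left_field
    using last by (intro exI[of _ "ts k"]) (auto simp: m_def intro!: seg)
  moreover from this have "left_val \<rho> t = \<rho> m" by (rule left_val_eqI)
  ultimately show ?thesis by simp
qed

lemma pre_run_interval_induct:
  assumes run: "pre_run \<rho>" and "0 \<le> a"
    and start: "P (right_val \<rho> a)"
    and left_step: "\<And>t. a < t \<Longrightarrow> t < b \<Longrightarrow> P (left_val \<rho> t) \<Longrightarrow> P (\<rho> t)"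
    and right_step: "\<And>t. a < t \<Longrightarrow> t < b \<Longrightarrow> P (\<rho> t) \<Longrightarrow> P (right_val \<rho> t)"
    and "a < u" "u < b"
  shows "P (\<rho> u)"
proof (rule ccontr)
  assume "\<not> P (\<rho> u)"
  define S where "S = {s. a < s \<and> s < b \<and> \<not> P (\<rho> s)}"
  define t0 where "t0 = Inf S"
  have "u \<in> S" using \<open>\<not> P (\<rho> u)\<close> \<open>a < u\<close> \<open>u < b\<close> by (simp add: S_def)
  have bdd: "bdd_below S" unfolding S_def bdd_below_def by (auto intro: less_imp_le)
  have t0_le: "t0 \<le> s" if "s \<in> S" for s unfolding t0_def using bdd that by (rule cInf_lower[rotated])
  have "a \<le> t0" unfolding t0_def using \<open>u \<in> S\<close> by (intro cInf_greatest) (auto simp: S_def)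
  have "t0 < b" using t0_le[OF \<open>u \<in> S\<close>] \<open>u < b\<close> by simp
  have P_below: "P (\<rho> s)" if "a < s" "s < t0" for s
    using t0_le[of s] that \<open>t0 < b\<close> by (force simp: S_def)
  have P_t0: "P (\<rho> t0)" if "a < t0"
  proof -
    have "\<forall>\<^sub>F s in at_left t0. P (\<rho> s)"
      unfolding eventually_at_left_field using that P_below by blast
    moreover have "\<forall>\<^sub>F s in at_left t0. \<rho> s = left_val \<rho> t0"
      using pre_run_eventually_left_val[OF run] that \<open>0 \<le> a\<close> by simp
    ultimately have "\<forall>\<^sub>F s in at_left t0. P (left_val \<rho> t0)" by eventually_elim simp
    then have "P (left_val \<rho> t0)" by (simp add: eventually_const trivial_limit_at_left_real)
    then show ?thesis using left_step that \<open>t0 < b\<close> by blast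
  qed
  then have "t0 \<notin> S" by (auto simp: S_def)
  have "P (right_val \<rho> t0)"
    using start right_step P_t0 \<open>a \<le> t0\<close> \<open>t0 < b\<close> by (cases "t0 = a") auto
  moreover have "\<forall>\<^sub>F s in at_right t0. \<rho> s = right_val \<rho> t0"
    using pre_run_eventually_right_val[OF run] \<open>a \<le> t0\<close> \<open>0 \<le> a\<close> by simp
  ultimately have "\<forall>\<^sub>F s in at_right t0. P (\<rho> s)" by (auto elim: eventually_mono)
  then obtain c where "t0 < c" and P_right: "\<And>s. t0 < s \<Longrightarrow> s < c \<Longrightarrow> P (\<rho> s)"
    unfolding eventually_at_right_field by blast
  then obtain s where "s \<in> S" "s < c"
    using cInf_less_iff[OF _ bdd] \<open>u \<in> S\<close> unfolding t0_def by blast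
  moreover have "t0 < s" using t0_le[OF \<open>s \<in> S\<close>] \<open>s \<in> S\<close> \<open>t0 \<notin> S\<close> by (cases "t0 = s") auto
  ultimately show False using P_right by (auto simp: S_def)
qed

lemma new_val_eq: "consistent U \<Longrightarrow> (l, v) \<in> U \<Longrightarrow> new_val U s l = v"
  unfolding new_val_def consistent_def by (auto intro: the_equality)

lemma new_val_unchanged: "\<nexists>v. (l, v) \<in> U \<Longrightarrow> new_val U s l = val_at l s"
  by (simp add: new_val_def)

lemma exec_agents_empty: "exec_agents dc dop dmin {} t s = s"
  by (simp add: exec_agents_def fire_upds_def consistent_def apply_upds_def new_val_def)

lemma agent_upds_LDir:
  assumes "(LDir, v) \<in> (\<Union>X\<in>A. agent_upds dc dop dmin X t s)"
  shows "v = VDir DClose \<and> (\<exists>x. Deadline s x = Fin t)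
    \<or> v = VDir DOpen \<and> Controller \<in> A \<and> Dir s = DClose \<and> SafeToOpen dop t s"
proof -
  obtain X where "X \<in> A" "(LDir, v) \<in> agent_upds dc dop dmin X t s" using assms by blast
  then show ?thesis
    by (cases X) (auto simp: agent_upds_def gate_upds_def controller_upds_def split: if_splits)
qed

lemma agent_upds_LDeadline:
  assumes "(LDeadline x, v) \<in> (\<Union>X\<in>A. agent_upds dc dop dmin X t s)"
  shows "v = VDL (Fin (t + (dmin - dc))) \<and> TrackStatus s x = Coming
    \<or> v = VDL PInf \<and> TrackStatus s x = Empty \<and> xless (Deadline s x) PInf"
proof -
  obtain X where "X \<in> A" "(LDeadline x, v) \<in> agent_upds dc dop dmin X t s" using assms by blast
  then show ?thesis
    by (cases X) (auto simp: agent_upds_def gate_upds_def controller_upds_def split: if_splits)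
qed

lemma Deadline_exec_agents:
  "Deadline (exec_agents dc dop dmin A t s) x \<in> {Deadline s x, Fin (t + (dmin - dc)), PInf}"
proof -
  let ?U = "\<Union>X\<in>A. agent_upds dc dop dmin X t s"
  have "getDL (new_val ?U s (LDeadline x)) \<in> {Deadline s x, Fin (t + (dmin - dc)), PInf}"
    if "consistent ?U"
  proof (cases "\<exists>v. (LDeadline x, v) \<in> ?U")
    case True
    then obtain v where v: "(LDeadline x, v) \<in> ?U" ..
    then show ?thesis
      using new_val_eq[OF that v] agent_upds_LDeadline[OF v] by auto
  qed (simp add: new_val_unchanged)
  then show ?thesis by (simp add: exec_agents_def fire_upds_def apply_upds_def)
qed

lemma Deadline_exec_agents_Empty:
  assumes "Controller \<in> A" "consistent (\<Union>X\<in>A. agent_upds dc dop dmin X t s)"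
    and "TrackStatus s x = Empty"
  shows "Deadline (exec_agents dc dop dmin A t s) x = PInf"
proof -
  let ?U = "\<Union>X\<in>A. agent_upds dc dop dmin X t s"
  have "getDL (new_val ?U s (LDeadline x)) = PInf"
  proof (cases "Deadline s x")
    case (Fin r)
    with assms have "(LDeadline x, VDL PInf) \<in> ?U"
      by (force simp: agent_upds_def controller_upds_def)
    then show ?thesis using new_val_eq[OF assms(2)] by simp
  next
    case PInf
    then have "\<nexists>v. (LDeadline x, v) \<in> ?U" using agent_upds_LDeadline assms(3) by fastforce
    then show ?thesis using PInf by (simp add: new_val_unchanged)
  qed
  then show ?thesis using assms(2) by (simp add: exec_agents_def fire_upds_def apply_upds_def)
qed

lemma Dir_exec_agents_stays_open:
  assumes "Dir s = DOpen" "\<forall>x. Deadline s x \<noteq> Fin t"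
  shows "Dir (exec_agents dc dop dmin A t s) = DOpen"
proof -
  let ?U = "\<Union>X\<in>A. agent_upds dc dop dmin X t s"
  have "\<nexists>v. (LDir, v) \<in> ?U"
  proof
    assume "\<exists>v. (LDir, v) \<in> ?U"
    then obtain v where "(LDir, v) \<in> ?U" ..
    from agent_upds_LDir[OF this] assms show False by auto
  qed
  then show ?thesis
    using assms(1) by (simp add: exec_agents_def fire_upds_def apply_upds_def new_val_unchanged)
qed

lemma Dir_exec_agents_opened:
  assumes "Dir s = DClose" "Dir (exec_agents dc dop dmin A t s) = DOpen"
  shows "Controller \<in> A \<and> SafeToOpen dop t s \<and> consistent (\<Union>X\<in>A. agent_upds dc dop dmin X t s)"
proof -
  let ?U = "\<Union>X\<in>A. agent_upds dc dop dmin X t s"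
  have cons: "consistent ?U"
    using assms by (auto simp: exec_agents_def fire_upds_def split: if_splits)
  have "\<exists>v. (LDir, v) \<in> ?U"
  proof (rule ccontr)
    assume "\<nexists>v. (LDir, v) \<in> ?U"
    then show False
      using assms cons by (simp add: exec_agents_def fire_upds_def apply_upds_def new_val_unchanged)
  qed
  then obtain v where v: "(LDir, v) \<in> ?U" ..
  then have "getDir v = DOpen"
    using assms(2) cons new_val_eq[OF cons v] by (simp add: exec_agents_def fire_upds_def apply_upds_def)
  then show ?thesis using agent_upds_LDir[OF v] cons by auto
qed

definition open_until :: "real \<Rightarrow> 't rstate \<Rightarrow> bool" where
  "open_until c s \<longleftrightarrow> Dir s = DOpen \<and> (\<forall>x. \<not> xless (Deadline s x) (Fin c))"

lemma open_until_exec_agents: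
  assumes "open_until c s" "t < c" "c \<le> t + (dmin - dc)"
  shows "open_until c (exec_agents dc dop dmin A t s)"
proof -
  have "Deadline s x \<noteq> Fin t" for x
    using assms(1,2) unfolding open_until_def by (metis xless.simps(1))
  then have "Dir (exec_agents dc dop dmin A t s) = DOpen"
    using assms(1) by (intro Dir_exec_agents_stays_open) (auto simp: open_until_def)
  moreover have "\<not> xless (Deadline (exec_agents dc dop dmin A t s) x) (Fin c)" for x
    using Deadline_exec_agents[of dc dop dmin A t s x] assms by (auto simp: open_until_def)
  ultimately show ?thesis by (simp add: open_until_def)
qed

lemma open_until_after_opening:
  assumes "Dir s = DClose" "Dir (exec_agents dc dop dmin A t s) = DOpen" "dop \<le> dmin - dc"
  shows "open_until (t + dop) (exec_agents dc dop dmin A t s)"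
proof -
  have ctrl: "Controller \<in> A" and safe: "SafeToOpen dop t s"
    and cons: "consistent (\<Union>X\<in>A. agent_upds dc dop dmin X t s)"
    using Dir_exec_agents_opened[OF assms(1,2)] by auto
  have "\<not> xless (Deadline (exec_agents dc dop dmin A t s) x) (Fin (t + dop))" for x
  proof (cases "TrackStatus s x = Empty")
    case True
    then show ?thesis using Deadline_exec_agents_Empty[OF ctrl cons] by simp
  next
    case False
    then have "xless (Fin (t + dop)) (Deadline s x)" using safe unfolding SafeToOpen_def by blast
    then show ?thesis
      using Deadline_exec_agents[of dc dop dmin A t s x] assms(3) by (cases "Deadline s x") auto
  qed
  with assms(2) show ?thesis by (simp add: open_until_def)
qed

lemma is_run_left_val:
  assumes "is_run dc dop dmin \<rho>" "0 < t"
  shows "Deadline (left_val \<rho> t) = Deadline (\<rho> t) \<and> Dir (left_val \<rho> t) = Dir (\<rho> t)"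
  using assms unfolding is_run_def by (cases "\<rho> t = left_val \<rho> t") auto

lemma is_run_right_val:
  assumes "is_run dc dop dmin \<rho>" "0 \<le> t"
  obtains A where "right_val \<rho> t = exec_agents dc dop dmin A t (\<rho> t)"
  using assms exec_agents_empty unfolding is_run_def by metis

lemma is_run_set_to_at_Dir:
  assumes "is_run dc dop dmin \<rho>" "set_to_at \<rho> Dir v t"
  shows "Dir (\<rho> t) \<noteq> v" "Dir (right_val \<rho> t) = v"
  using assms(2) is_run_left_val[OF assms(1)] unfolding set_to_at_def by auto

theorem mainTheorem13:
  fixes \<rho> :: "real \<Rightarrow> ('t::finite) rstate"
    and dc dop dmin dmax \<alpha> :: real
  assumes "0 < dc" and "0 < dop" and "0 < dmin" and "0 < dmax"
    and "dc < dmin" and "dmin \<le> dmax"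
    and "dmin \<ge> dc + dop"
    and "regular_run dc dop dmin dmax \<rho>"
    and "\<alpha> \<ge> 0"
    and "set_to_at \<rho> Dir DOpen \<alpha>"
  shows "\<forall>u\<in>{\<alpha><..<\<alpha> + dop}. Dir (\<rho> u) = DOpen"
proof
  fix u assume u: "u \<in> {\<alpha><..<\<alpha> + dop}"
  have run: "is_run dc dop dmin \<rho>" using assms(8) by (simp add: regular_run_def)
  have W: "dop \<le> dmin - dc" using assms(7) by simp
  have start: "open_until (\<alpha> + dop) (right_val \<rho> \<alpha>)"
  proof -
    obtain A where A: "right_val \<rho> \<alpha> = exec_agents dc dop dmin A \<alpha> (\<rho> \<alpha>)"
      using is_run_right_val[OF run assms(9)] .
    have "Dir (\<rho> \<alpha>) = DClose" "Dir (right_val \<rho> \<alpha>) = DOpen"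
      using is_run_set_to_at_Dir[OF run assms(10)] dirv.exhaust by blast+
    then show ?thesis using open_until_after_opening[OF _ _ W] A by simp
  qed
  have "open_until (\<alpha> + dop) (\<rho> u)"
  proof (rule pre_run_interval_induct[where P = "open_until (\<alpha> + dop)" and b = "\<alpha> + dop"])
    fix t assume "\<alpha> < t" "open_until (\<alpha> + dop) (left_val \<rho> t)"
    then show "open_until (\<alpha> + dop) (\<rho> t)"
      using is_run_left_val[OF run] assms(9) by (simp add: open_until_def)
  next
    fix t assume "\<alpha> < t" "t < \<alpha> + dop" "open_until (\<alpha> + dop) (\<rho> t)"
    moreover obtain A where "right_val \<rho> t = exec_agents dc dop dmin A t (\<rho> t)"
      using is_run_right_val[OF run, of t] \<open>\<alpha> < t\<close> assms(9) by auto
    ultimately show "open_until (\<alpha> + dop) (right_val \<rho> t)"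
      using W by (simp add: open_until_exec_agents)
  qed (use run u start assms(9) in \<open>auto simp: is_run_def\<close>)
  then show "Dir (\<rho> u) = DOpen" by (simp add: open_until_def)
qed

end
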